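(* Consider the multi-product pricing model in the context, with a given positive vector $f\in\mathbb{R}^n$, exogenously given $q_{\min}>0$ and $q_{\max}=e^{k}q_{\min}$ for some $k>0$, and suppose the firm restricts prices to $p_i\in[q_{\min}f_i,\,q_{\max}f_i]$ for all $i\in N$ (for every customer type). Let $\bar{\mathcal{R}}$ be the maximum personalized profit subject to these constraints and $\mathcal{R}^f:=\max_{q\in[q_{\min},q_{\max}]}R(qf)$. If A0 and A1 hold, then $\bar{\mathcal{R}}\le (1+k)\,\mathcal{R}^f$.
   Context: Products $N=\{1,\dots,n\}$, customer types $M=\{1,\dots,m\}$, non-negative demand functions $d_{ij}(p)$ for product $i$ and type $j$ at price vector $p\in\mathbb{R}^n_{\ge0}$; type profit $R_j(p)=\sum_i p_id_{ij}(p)$; weights $\theta_j>0$ with $\sum_j\theta_j=1$; $R(p)=\sum_j\theta_jR_j(p)$. In the constrained setting, let $\mathcal{P}:=\{p: q_{\min}f_i\le p_i\le q_{\max}f_i,\ i\in N\}$, $\mathcal{R}^*_j:=\max_{p\in\mathcal{P}}R_j(p)$ and $\bar{\mathcal{R}}:=\sum_j\theta_j\mathcal{R}^*_j$. Assumption A0: for each $j$, the maximum of $R_j$ over $\mathcal{P}$ is attained at a price vector $\bar p^j$ with positive finite components; these are fixed. Define $\delta_{ij}(q):=1$ if $q\le\bar p_{ij}/f_i$ and $0$ otherwise, $G(q):=\sum_j\theta_j\sum_i f_id_{ij}(\bar p^j)\delta_{ij}(q)$ and $H(q):=\sum_j\theta_j\sum_i f_id_{ij}(qf)$. Assumption A1: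 $G(q)\le H(q)$ for all $q\ge0$. *)

theory Defs
  imports Complex_Main
begin

text \<open>Products are the elements of a finite type 'i, customer types those of a finite type 'j.
  A price vector is a function 'i \<Rightarrow> real. The demand d i j p is d_ij(p).\<close>

definition type_profit :: "('i::finite \<Rightarrow> 'j \<Rightarrow> ('i \<Rightarrow> real) \<Rightarrow> real) \<Rightarrow> 'j \<Rightarrow> ('i \<Rightarrow> real) \<Rightarrow> real" where
  "type_profit d j p = (\<Sum>i\<in>UNIV. p i * d i j p)"

definition total_profit :: "('j::finite \<Rightarrow> real) \<Rightarrow> ('i::finite \<Rightarrow> 'j \<Rightarrow> ('i \<Rightarrow> real) \<Rightarrow> real) \<Rightarrow> ('i \<Rightarrow> real) \<Rightarrow> real" where
  "total_profit \<theta> d p = (\<Sum>j\<in>UNIV. \<theta> j * type_profit d j p)"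

definition price_box :: "real \<Rightarrow> real \<Rightarrow> ('i \<Rightarrow> real) \<Rightarrow> ('i \<Rightarrow> real) set" where
  "price_box qmin qmax f = {p. \<forall>i. qmin * f i \<le> p i \<and> p i \<le> qmax * f i}"

text \<open>Maximal type-j profit over the box (a max; under A0 it is attained).\<close>
definition type_opt :: "('i::finite \<Rightarrow> 'j \<Rightarrow> ('i \<Rightarrow> real) \<Rightarrow> real) \<Rightarrow> real \<Rightarrow> real \<Rightarrow> ('i \<Rightarrow> real) \<Rightarrow> 'j \<Rightarrow> real" where
  "type_opt d qmin qmax f j = (SUP p \<in> price_box qmin qmax f. type_profit d j p)"

definition personalized_opt :: "('j::finite \<Rightarrow> real) \<Rightarrow> ('i::finite \<Rightarrow> 'j \<Rightarrow> ('i \<Rightarrow> real) \<Rightarrow> real) \<Rightarrow> real \<Rightarrow> real \<Rightarrow> ('i \<Rightarrow> real) \<Rightarrow> real" where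
  "personalized_opt \<theta> d qmin qmax f = (\<Sum>j\<in>UNIV. \<theta> j * type_opt d qmin qmax f j)"

definition uniform_opt :: "('j::finite \<Rightarrow> real) \<Rightarrow> ('i::finite \<Rightarrow> 'j \<Rightarrow> ('i \<Rightarrow> real) \<Rightarrow> real) \<Rightarrow> real \<Rightarrow> real \<Rightarrow> ('i \<Rightarrow> real) \<Rightarrow> real" where
  "uniform_opt \<theta> d qmin qmax f = (SUP q \<in> {qmin..qmax}. total_profit \<theta> d (\<lambda>i. q * f i))"

definition delta_ind :: "('j \<Rightarrow> 'i \<Rightarrow> real) \<Rightarrow> ('i \<Rightarrow> real) \<Rightarrow> 'i \<Rightarrow> 'j \<Rightarrow> real \<Rightarrow> real" where
  "delta_ind pbar f i j q = (if q \<le> pbar j i / f i then 1 else 0)"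

definition G_fun :: "('j::finite \<Rightarrow> real) \<Rightarrow> ('i::finite \<Rightarrow> 'j \<Rightarrow> ('i \<Rightarrow> real) \<Rightarrow> real) \<Rightarrow> ('j \<Rightarrow> 'i \<Rightarrow> real) \<Rightarrow> ('i \<Rightarrow> real) \<Rightarrow> real \<Rightarrow> real" where
  "G_fun \<theta> d pbar f q = (\<Sum>j\<in>UNIV. \<theta> j * (\<Sum>i\<in>UNIV. f i * d i j (pbar j) * delta_ind pbar f i j q))"

definition H_fun :: "('j::finite \<Rightarrow> real) \<Rightarrow> ('i::finite \<Rightarrow> 'j \<Rightarrow> ('i \<Rightarrow> real) \<Rightarrow> real) \<Rightarrow> ('i \<Rightarrow> real) \<Rightarrow> real \<Rightarrow> real" where
  "H_fun \<theta> d f q = (\<Sum>j\<in>UNIV. \<theta> j * (\<Sum>i\<in>UNIV. f i * d i j (\<lambda>l. q * f l)))"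

end

(* Attach to each pair (i, j) of a product and a customer type the weight
   \<theta>_j f_i d_ij(pbar^j) and the level t_ij = pbar_ij / f_i in [qmin, qmax].
   The personalized optimum is the weighted sum of the levels, and G(q) is the
   weight of the levels >= q, so by the layer-cake formula
     sum w t = qmin G(qmin) + integral of G over [qmin, qmax].
   By A1, q G(q) <= q H(q) = R(q f) <= R^f, hence the sum is at most
   R^f (1 + integral of dq/q) = (1 + ln (qmax / qmin)) R^f = (1 + k) R^f. *)

theory Submission
  imports Defs "HOL-Analysis.Henstock_Kurzweil_Integration"
begin

lemma has_integral_const_divide:
  fixes a b c :: real
  assumes "0 < a" "a \<le> b"
  shows "((\<lambda>x. c / x) has_integral c * ln (b / a)) {a..b}"
proof -
  have "((\<lambda>x. c / x) has_integral c * ln b - c * ln a) {a..b}"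
  proof (rule fundamental_theorem_of_calculus[OF \<open>a \<le> b\<close>])
    fix x assume "x \<in> {a..b}"
    then have "x > 0" using assms by auto
    then show "((\<lambda>x. c * ln x) has_vector_derivative c / x) (at x within {a..b})"
      by (auto intro!: derivative_eq_intros simp: has_real_derivative_iff_has_vector_derivative[symmetric])
  qed
  then show ?thesis using assms by (simp add: ln_div right_diff_distrib)
qed

lemma has_integral_step_real:
  fixes a b c t :: real
  assumes "a \<le> t" "t \<le> b"
  shows "((\<lambda>x. if x \<le> t then c else 0) has_integral c * (t - a)) {a..b}"
proof -
  have "((\<lambda>x. c) has_integral content {a..t} *\<^sub>R c) (cbox a t)"
    unfolding box_real(2) by (rule has_integral_const_real)
  then have "((\<lambda>x. if x \<in> cbox a t then c else 0) has_integral content {a..t} *\<^sub>R c) (cbox a b)"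
    by (rule has_integral_restrict_closed_subinterval) (use assms in auto)
  then have "((\<lambda>x. if x \<in> {a..t} then c else 0) has_integral c * (t - a)) {a..b}"
    using assms by (simp add: mult.commute)
  then show ?thesis
    by (rule has_integral_eq[rotated]) (use assms in auto)
qed

lemma weighted_sum_le_by_tail_bound:
  fixes w t :: "'s \<Rightarrow> real" and a b C :: real
  assumes "finite S" "0 < a" "a \<le> b"
    and t_range: "\<And>s. s \<in> S \<Longrightarrow> a \<le> t s \<and> t s \<le> b"
    and tail: "\<And>q. a \<le> q \<Longrightarrow> q \<le> b \<Longrightarrow> q * (\<Sum>s\<in>{s\<in>S. q \<le> t s}. w s) \<le> C"
  shows "(\<Sum>s\<in>S. w s * t s) \<le> C * (1 + ln (b / a))"
proof -
  define W where "W q = (\<Sum>s\<in>S. if q \<le> t s then w s else 0)" for q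
  have W_eq: "W q = (\<Sum>s\<in>{s\<in>S. q \<le> t s}. w s)" for q
    unfolding W_def using \<open>finite S\<close> by (simp add: sum.inter_filter)
  have "(W has_integral (\<Sum>s\<in>S. w s * (t s - a))) {a..b}"
    unfolding W_def using \<open>finite S\<close> t_range
    by (intro has_integral_sum has_integral_step_real) auto
  moreover have "((\<lambda>q. C / q) has_integral C * ln (b / a)) {a..b}"
    using \<open>0 < a\<close> \<open>a \<le> b\<close> by (rule has_integral_const_divide)
  moreover have "W q \<le> C / q" if "q \<in> {a..b}" for q
    using tail[of q] that \<open>0 < a\<close> by (simp add: W_eq field_simps)
  ultimately have integral_part: "(\<Sum>s\<in>S. w s * (t s - a)) \<le> C * ln (b / a)"
    by (rule has_integral_le)
  have "a * (\<Sum>s\<in>S. w s) \<le> C"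
    using tail[of a] t_range \<open>a \<le> b\<close> by (simp add: W_eq[symmetric] W_def)
  moreover have "(\<Sum>s\<in>S. w s * t s) = a * (\<Sum>s\<in>S. w s) + (\<Sum>s\<in>S. w s * (t s - a))"
    by (simp add: sum_distrib_left sum.distrib[symmetric] algebra_simps)
  ultimately show ?thesis using integral_part by (simp add: distrib_left)
qed

lemma type_opt_eq_type_profit_maximizer:
  assumes "p0 \<in> price_box qmin qmax f"
    and "\<And>p. p \<in> price_box qmin qmax f \<Longrightarrow> type_profit d j p \<le> type_profit d j p0"
  shows "type_opt d qmin qmax f j = type_profit d j p0"
  unfolding type_opt_def using assms by (intro cSup_eq_maximum) auto

lemma total_profit_scaled_price:
  "total_profit \<theta> d (\<lambda>i. q * f i) = q * H_fun \<theta> d f q"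
  unfolding total_profit_def type_profit_def H_fun_def
  by (simp add: sum_distrib_left algebra_simps)

lemma scaled_price_in_price_box:
  assumes "\<And>i. 0 \<le> f i" "qmin \<le> q" "q \<le> qmax"
  shows "(\<lambda>i. q * f i) \<in> price_box qmin qmax f"
  using assms unfolding price_box_def by (auto intro: mult_right_mono)

lemma total_profit_le_uniform_opt:
  assumes \<theta>_nonneg: "\<And>j. 0 \<le> \<theta> j" and f_nonneg: "\<And>i. 0 \<le> f i"
    and maximizer: "\<And>j p. p \<in> price_box qmin qmax f \<Longrightarrow> type_profit d j p \<le> type_profit d j (pbar j)"
    and "qmin \<le> q" "q \<le> qmax"
  shows "total_profit \<theta> d (\<lambda>i. q * f i) \<le> uniform_opt \<theta> d qmin qmax f"
proof -
  have "total_profit \<theta> d (\<lambda>i. q' * f i) \<le> (\<Sum>j\<in>UNIV. \<theta> j * type_profit d j (pbar j))"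
    if "q' \<in> {qmin..qmax}" for q'
    unfolding total_profit_def using that f_nonneg \<theta>_nonneg
    by (intro sum_mono mult_left_mono maximizer scaled_price_in_price_box) auto
  then have "bdd_above ((\<lambda>q. total_profit \<theta> d (\<lambda>i. q * f i)) ` {qmin..qmax})"
    by (rule bdd_aboveI2)
  then show ?thesis
    unfolding uniform_opt_def using assms by (intro cSup_upper) auto
qed

lemma G_fun_eq_sum_pairs:
  "G_fun \<theta> d pbar f q = (\<Sum>(i, j) | q \<le> pbar j i / f i. \<theta> j * f i * d i j (pbar j))"
proof -
  have "G_fun \<theta> d pbar f q
      = (\<Sum>j\<in>UNIV. \<Sum>i\<in>UNIV. if q \<le> pbar j i / f i then \<theta> j * f i * d i j (pbar j) else 0)"
    unfolding G_fun_def delta_ind_def by (simp add: sum_distrib_left if_distrib mult.assoc cong: if_cong)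
  also have "\<dots> = (\<Sum>(i, j)\<in>UNIV. if q \<le> pbar j i / f i then \<theta> j * f i * d i j (pbar j) else 0)"
    by (subst sum.swap) (simp add: sum.cartesian_product flip: UNIV_Times_UNIV)
  also have "\<dots> = (\<Sum>(i, j) | q \<le> pbar j i / f i. \<theta> j * f i * d i j (pbar j))"
    by (simp add: sum.inter_filter[symmetric] split_def)
  finally show ?thesis .
qed

lemma personalized_opt_eq_sum_pairs:
  assumes f_nonzero: "\<And>i. f i \<noteq> 0"
    and "\<And>j. pbar j \<in> price_box qmin qmax f"
    and "\<And>j p. p \<in> price_box qmin qmax f \<Longrightarrow> type_profit d j p \<le> type_profit d j (pbar j)"
  shows "personalized_opt \<theta> d qmin qmax f
    = (\<Sum>(i, j)\<in>UNIV. \<theta> j * f i * d i j (pbar j) * (pbar j i / f i))"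
proof -
  have "personalized_opt \<theta> d qmin qmax f = (\<Sum>j\<in>UNIV. \<theta> j * type_profit d j (pbar j))"
    unfolding personalized_opt_def using type_opt_eq_type_profit_maximizer[OF assms(2,3)] by simp
  also have "\<dots> = (\<Sum>j\<in>UNIV. \<Sum>i\<in>UNIV. \<theta> j * f i * d i j (pbar j) * (pbar j i / f i))"
    unfolding type_profit_def using f_nonzero by (simp add: sum_distrib_left mult_ac)
  also have "\<dots> = (\<Sum>(i, j)\<in>UNIV. \<theta> j * f i * d i j (pbar j) * (pbar j i / f i))"
    by (subst sum.swap) (simp add: sum.cartesian_product flip: UNIV_Times_UNIV)
  finally show ?thesis .
qed

theorem corollary1:
  fixes d :: "'i::finite \<Rightarrow> 'j::finite \<Rightarrow> ('i \<Rightarrow> real) \<Rightarrow> real"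
    and \<theta> :: "'j \<Rightarrow> real"
    and f :: "'i \<Rightarrow> real"
    and pbar :: "'j \<Rightarrow> 'i \<Rightarrow> real"
    and qmin qmax k :: real
  assumes d_nonneg: "\<And>i j p. (\<forall>l. p l \<ge> 0) \<Longrightarrow> d i j p \<ge> 0"
    and theta_pos: "\<And>j. \<theta> j > 0"
    and theta_sum: "(\<Sum>j\<in>UNIV. \<theta> j) = 1"
    and f_pos: "\<And>i. f i > 0"
    and qmin_pos: "qmin > 0"
    and k_pos: "k > 0"
    and qmax_def: "qmax = exp k * qmin"
    and A0_in: "\<And>j. pbar j \<in> price_box qmin qmax f"
    and A0_pos: "\<And>j i. pbar j i > 0"
    and A0_max: "\<And>j p. p \<in> price_box qmin qmax f \<Longrightarrow> type_profit d j p \<le> type_profit d j (pbar j)"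
    and A1: "\<And>q. q \<ge> 0 \<Longrightarrow> G_fun \<theta> d pbar f q \<le> H_fun \<theta> d f q"
  shows "personalized_opt \<theta> d qmin qmax f \<le> (1 + k) * uniform_opt \<theta> d qmin qmax f"
proof -
  define w where "w = (\<lambda>(i, j). \<theta> j * f i * d i j (pbar j))"
  define t where "t = (\<lambda>(i, j). pbar j i / f i)"
  have qmin_le_qmax: "qmin \<le> qmax" using qmax_def qmin_pos k_pos by simp
  have "personalized_opt \<theta> d qmin qmax f = (\<Sum>s\<in>UNIV. w s * t s)"
    using personalized_opt_eq_sum_pairs[of f pbar qmin qmax d \<theta>] f_pos A0_in A0_max
    unfolding w_def t_def by (simp add: split_def less_imp_neq[symmetric])
  also have "\<dots> \<le> uniform_opt \<theta> d qmin qmax f * (1 + ln (qmax / qmin))"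
  proof (rule weighted_sum_le_by_tail_bound)
    fix s :: "'i \<times> 'j"
    obtain i j where s: "s = (i, j)" by (cases s)
    have "qmin * f i \<le> pbar j i" "pbar j i \<le> qmax * f i"
      using A0_in[of j] unfolding price_box_def by auto
    then show "qmin \<le> t s \<and> t s \<le> qmax" unfolding t_def s using f_pos[of i]
      by (simp add: field_simps)
  next
    fix q assume q: "qmin \<le> q" "q \<le> qmax"
    have "q * (\<Sum>s\<in>{s\<in>UNIV. q \<le> t s}. w s) = q * G_fun \<theta> d pbar f q"
      unfolding G_fun_eq_sum_pairs w_def t_def by (simp add: split_def)
    also have "\<dots> \<le> q * H_fun \<theta> d f q"
      using A1[of q] q qmin_pos by (intro mult_left_mono) auto
    also have "\<dots> \<le> uniform_opt \<theta> d qmin qmax f"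
      using total_profit_le_uniform_opt[OF _ _ A0_max q] theta_pos f_pos
      by (simp add: total_profit_scaled_price less_imp_le)
    finally show "q * (\<Sum>s\<in>{s\<in>UNIV. q \<le> t s}. w s) \<le> uniform_opt \<theta> d qmin qmax f" .
  qed (use qmin_pos qmin_le_qmax in auto)
  also have "ln (qmax / qmin) = k" using qmax_def qmin_pos by simp
  finally show ?thesis by (simp add: mult.commute)
qed

end
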